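(* Let $\mathcal{T}$ be a separable multi-transducer with a single initial state. Then $[\![\mathcal{T}]\!]$ is multi-sequential.
   Context: A multi-transducer is a tuple $\mathcal{T}=(Q,E,I,F,f)$ with finite state set $Q$, initial states $I$, final states $F$, transitions $E\subseteq Q\times\Sigma\times\Gamma^*\times Q$, and a final output function $f$ mapping each final state to a finite set of words of $\Gamma^*$; it realises $[\![\mathcal{T}]\!]=\{(u,wx) : i\xrightarrow{u\mid w}t,\ i\in I,\ t\in F,\ x\in f(t)\}$, where $i\xrightarrow{u\mid w}t$ means a run from $i$ to $t$ reading $u$ and outputting $w$. A transition is transient if its source and target lie in distinct strongly connected components (equivalently there is no run from its target to its source). $\mathcal{T}$ is separable if it has a single initial state and any two distinct transitions with the same source and the same input letter are transient. A transducer (final output function into $\Gamma^*$) is sequential if it has a single initial state and at most one transition per (state, input letter); a sequential function is one realised by a sequential transducer; a relation is multi-sequential if it is a finite union of sequential functions. *)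

theory Defs
  imports Main
begin

inductive run :: "('q \<times> 'a \<times> 'b list \<times> 'q) set \<Rightarrow> 'q \<Rightarrow> 'a list \<Rightarrow> 'b list \<Rightarrow> 'q \<Rightarrow> bool"
  for E where
  run_nil: "run E p [] [] p"
| run_cons: "(p, a, v, p') \<in> E \<Longrightarrow> run E p' u w q \<Longrightarrow> run E p (a # u) (v @ w) q"

record ('q, 'a, 'b) mtrans =
  mt_states :: "'q set"
  mt_trans  :: "('q \<times> 'a \<times> 'b list \<times> 'q) set"
  mt_init   :: "'q set"
  mt_final  :: "'q set"
  mt_fout   :: "'q \<Rightarrow> 'b list set"

definition wf_mtrans :: "('q, 'a, 'b) mtrans \<Rightarrow> bool" where
  "wf_mtrans T \<longleftrightarrow>
     finite (mt_states T) \<and> finite (mt_trans T) \<and>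
     (\<forall>(p, a, v, q) \<in> mt_trans T. p \<in> mt_states T \<and> q \<in> mt_states T) \<and>
     mt_init T \<subseteq> mt_states T \<and> mt_final T \<subseteq> mt_states T \<and>
     (\<forall>t \<in> mt_final T. finite (mt_fout T t))"

definition mt_sem :: "('q, 'a, 'b) mtrans \<Rightarrow> ('a list \<times> 'b list) set" where
  "mt_sem T = {(u, w @ x) | u w x i t.
      i \<in> mt_init T \<and> t \<in> mt_final T \<and> run (mt_trans T) i u w t \<and> x \<in> mt_fout T t}"

definition transient :: "('q \<times> 'a \<times> 'b list \<times> 'q) set \<Rightarrow> ('q \<times> 'a \<times> 'b list \<times> 'q) \<Rightarrow> bool" where
  "transient E e \<longleftrightarrow> (case e of (p, a, v, q) \<Rightarrow> \<not> (\<exists>u w. run E q u w p))"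

definition separable :: "('q, 'a, 'b) mtrans \<Rightarrow> bool" where
  "separable T \<longleftrightarrow>
     (\<exists>i. mt_init T = {i}) \<and>
     (\<forall>e1 \<in> mt_trans T. \<forall>e2 \<in> mt_trans T.
        e1 \<noteq> e2 \<and> fst e1 = fst e2 \<and> fst (snd e1) = fst (snd e2) \<longrightarrow>
        transient (mt_trans T) e1 \<and> transient (mt_trans T) e2)"

record ('q, 'a, 'b) strans =
  st_states :: "'q set"
  st_trans  :: "('q \<times> 'a \<times> 'b list \<times> 'q) set"
  st_init   :: "'q"
  st_final  :: "'q set"
  st_fout   :: "'q \<Rightarrow> 'b list"

definition sequential_trans :: "('q, 'a, 'b) strans \<Rightarrow> bool" where
  "sequential_trans S \<longleftrightarrow>
     finite (st_states S) \<and> finite (st_trans S) \<and>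
     (\<forall>(p, a, v, q) \<in> st_trans S. p \<in> st_states S \<and> q \<in> st_states S) \<and>
     st_init S \<in> st_states S \<and> st_final S \<subseteq> st_states S \<and>
     (\<forall>p a v q v' q'. (p, a, v, q) \<in> st_trans S \<and> (p, a, v', q') \<in> st_trans S
        \<longrightarrow> v = v' \<and> q = q')"

definition st_sem :: "('q, 'a, 'b) strans \<Rightarrow> ('a list \<times> 'b list) set" where
  "st_sem S = {(u, w @ st_fout S t) | u w t.
      t \<in> st_final S \<and> run (st_trans S) (st_init S) u w t}"

text \<open>Sequential function: realised by some sequential transducer (state sets taken,
  without loss of generality, to be finite sets of natural numbers).\<close>
definition sequential_function :: "('a list \<times> 'b list) set \<Rightarrow> bool" where
  "sequential_function R \<longleftrightarrow>
     (\<exists>S :: (nat, 'a, 'b) strans. sequential_trans S \<and> R = st_sem S)"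

definition multi_sequential :: "('a list \<times> 'b list) set \<Rightarrow> bool" where
  "multi_sequential R \<longleftrightarrow>
     (\<exists>Rs. finite Rs \<and> (\<forall>R' \<in> Rs. sequential_function R') \<and> R = \<Union> Rs)"

end

theory Submission
  imports Defs
begin

text \<open>A transient transition can be taken at most once along a run, since afterwards its
  source is unreachable. Hence every run of a multi-transducer takes a distinct list of
  transient transitions, and there are only finitely many such lists. Fixing the list \<open>s\<close>,
  the final state \<open>t\<close> and the final output \<open>x\<close>, copy the state set \<open>length s + 1\<close> times:
  layer \<open>k\<close> keeps only the non-transient transitions, and the \<open>k\<close>-th transition of \<open>s\<close>
  leads from layer \<open>k\<close> to layer \<open>k + 1\<close>. Separability makes each copy sequential, and the
  relation of the multi-transducer is the finite union of the realised functions.\<close>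

section \<open>Runs recording their transient transitions\<close>

inductive run_transients :: "('q \<times> 'a \<times> 'b list \<times> 'q) set \<Rightarrow> 'q \<Rightarrow> 'a list \<Rightarrow> 'b list
    \<Rightarrow> ('q \<times> 'a \<times> 'b list \<times> 'q) list \<Rightarrow> 'q \<Rightarrow> bool" for E where
  run_transients_nil: "run_transients E p [] [] [] p"
| run_transients_stay: "(p, a, v, p') \<in> E \<Longrightarrow> \<not> transient E (p, a, v, p')
    \<Longrightarrow> run_transients E p' u w s q \<Longrightarrow> run_transients E p (a # u) (v @ w) s q"
| run_transients_leave: "(p, a, v, p') \<in> E \<Longrightarrow> transient E (p, a, v, p')
    \<Longrightarrow> run_transients E p' u w s q \<Longrightarrow> run_transients E p (a # u) (v @ w) ((p, a, v, p') # s) q"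

lemma run_imp_run_transients: "run E p u w q \<Longrightarrow> \<exists>s. run_transients E p u w s q"
proof (induction rule: run.induct)
  case (run_nil p)
  then show ?case by (blast intro: run_transients_nil)
next
  case (run_cons p a v p' u w q)
  then obtain s where "run_transients E p' u w s q" by blast
  with run_cons.hyps show ?case
    by (cases "transient E (p, a, v, p')") (blast intro: run_transients.intros)+
qed

lemma run_transients_imp_run: "run_transients E p u w s q \<Longrightarrow> run E p u w q"
  by (induction rule: run_transients.induct) (auto intro: run.intros)

lemma run_transients_reaches_source:
  assumes "run_transients E p u w s q" and "e \<in> set s"
  shows "\<exists>u w. run E p u w (fst e)"
  using assms
proof (induction rule: run_transients.induct)
  case (run_transients_stay p a v p' u w s q)
  then show ?case by (blast intro: run_cons)
next
  case (run_transients_leave p a v p' u w s q)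
  then show ?case by (cases "e = (p, a, v, p')") (auto intro: run.intros)
qed simp

definition transient_lists :: "('q \<times> 'a \<times> 'b list \<times> 'q) set
    \<Rightarrow> ('q \<times> 'a \<times> 'b list \<times> 'q) list set" where
  "transient_lists E = {s. set s \<subseteq> {e \<in> E. transient E e} \<and> distinct s}"

lemma finite_transient_lists: "finite E \<Longrightarrow> finite (transient_lists E)"
  unfolding transient_lists_def by (rule finite_subset_distinct) simp

lemma run_transients_in_transient_lists:
  "run_transients E p u w s q \<Longrightarrow> s \<in> transient_lists E"
proof (induction rule: run_transients.induct)
  case (run_transients_leave p a v p' u w s q)
  have "(p, a, v, p') \<notin> set s"
  proof
    assume "(p, a, v, p') \<in> set s"
    from run_transients_reaches_source[OF run_transients_leave.hyps(3) this]
    obtain u' w' where "run E p' u' w' p" by auto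
    with run_transients_leave.hyps(2) show False unfolding transient_def by auto
  qed
  with run_transients_leave show ?case unfolding transient_lists_def by auto
qed (auto simp: transient_lists_def)

section \<open>Renaming the states of a sequential transducer\<close>

definition rename_trans :: "('q \<Rightarrow> 'r) \<Rightarrow> ('q \<times> 'a \<times> 'b list \<times> 'q) set
    \<Rightarrow> ('r \<times> 'a \<times> 'b list \<times> 'r) set" where
  "rename_trans f E = (\<lambda>(p, a, v, q). (f p, a, v, f q)) ` E"

lemma mem_rename_trans:
  "(p', a, v, q') \<in> rename_trans f E \<longleftrightarrow> (\<exists>p q. (p, a, v, q) \<in> E \<and> p' = f p \<and> q' = f q)"
  unfolding rename_trans_def by force

lemma run_rename_trans: "run E p u w q \<Longrightarrow> run (rename_trans f E) (f p) u w (f q)"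
proof (induction rule: run.induct)
  case (run_cons p a v p' u w q)
  then have "(f p, a, v, f p') \<in> rename_trans f E" by (auto simp: mem_rename_trans)
  then show ?case using run_cons.IH by (rule run.run_cons)
qed (rule run.run_nil)

lemma run_rename_trans_imp_run:
  assumes "run (rename_trans f E) p' u w q'" and "inj_on f S"
    and "\<forall>(p, a, v, q) \<in> E. p \<in> S \<and> q \<in> S" and "p \<in> S" and "p' = f p"
  shows "\<exists>q \<in> S. q' = f q \<and> run E p u w q"
  using assms(1,4,5)
proof (induction arbitrary: p rule: run.induct)
  case (run_nil p0)
  then show ?case by (auto intro: run.run_nil)
next
  case (run_cons p0 a v p1 u w q)
  then obtain x y where xy: "(x, a, v, y) \<in> E" "p0 = f x" "p1 = f y"
    by (auto simp: mem_rename_trans)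
  with assms(3) have "x \<in> S" "y \<in> S" by auto
  with run_cons.prems xy(2) assms(2) have "x = p" by (metis inj_on_eq_iff)
  from run_cons.IH[OF \<open>y \<in> S\<close> xy(3)] obtain q0 where "q0 \<in> S" "q = f q0" "run E y u w q0"
    by blast
  with xy(1) \<open>x = p\<close> show ?case by (blast intro: run.run_cons)
qed

definition rename_strans :: "('s \<Rightarrow> 'r) \<Rightarrow> ('s, 'a, 'b) strans \<Rightarrow> ('r, 'a, 'b) strans" where
  "rename_strans f S = \<lparr>st_states = f ` st_states S, st_trans = rename_trans f (st_trans S),
     st_init = f (st_init S), st_final = f ` st_final S,
     st_fout = st_fout S \<circ> inv_into (st_states S) f\<rparr>"

lemma sequential_trans_rename_strans:
  assumes S: "sequential_trans S" and f: "inj_on f (st_states S)"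
  shows "sequential_trans (rename_strans f S)"
proof -
  have closed: "\<forall>(p, a, v, q) \<in> st_trans S. p \<in> st_states S \<and> q \<in> st_states S"
    and fin: "finite (st_states S)" "finite (st_trans S)"
    and init: "st_init S \<in> st_states S" and final: "st_final S \<subseteq> st_states S"
    using S unfolding sequential_trans_def by blast+
  have closed': "\<forall>(p, a, v, q) \<in> rename_trans f (st_trans S). p \<in> f ` st_states S \<and> q \<in> f ` st_states S"
    using closed by (auto simp: rename_trans_def)
  have det: "v = v' \<and> q = q'"
    if "(p, a, v, q) \<in> rename_trans f (st_trans S)" and "(p, a, v', q') \<in> rename_trans f (st_trans S)"
    for p a v q v' q'
  proof -
    from that obtain x y x' y' where xy: "(x, a, v, y) \<in> st_trans S" "(x', a, v', y') \<in> st_trans S"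
      and eq: "p = f x" "q = f y" "p = f x'" "q' = f y'"
      by (auto simp: mem_rename_trans)
    from xy closed have "x \<in> st_states S" "x' \<in> st_states S" by auto
    with f eq have "x = x'" by (metis inj_on_eq_iff)
    with xy eq S show ?thesis unfolding sequential_trans_def by blast
  qed
  show ?thesis
    unfolding sequential_trans_def rename_strans_def strans.simps
  proof (intro conjI allI impI)
    show "finite (rename_trans f (st_trans S))" using fin(2) by (simp add: rename_trans_def)
  qed (use fin(1) closed' init final det in auto)
qed

lemma run_rename_trans_iff:
  assumes "inj_on f S" and "\<forall>(p, a, v, q) \<in> E. p \<in> S \<and> q \<in> S" and "p \<in> S" and "q \<in> S"
  shows "run (rename_trans f E) (f p) u w (f q) \<longleftrightarrow> run E p u w q"
  using run_rename_trans_imp_run[OF _ assms(1-3) refl] run_rename_trans assms(1,4)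
  by (metis inj_on_eq_iff)

lemma st_sem_rename_strans:
  assumes S: "sequential_trans S" and f: "inj_on f (st_states S)"
  shows "st_sem (rename_strans f S) = st_sem S"
proof -
  have closed: "\<forall>(p, a, v, q) \<in> st_trans S. p \<in> st_states S \<and> q \<in> st_states S"
    and init: "st_init S \<in> st_states S" and final: "st_final S \<subseteq> st_states S"
    using S unfolding sequential_trans_def by blast+
  have run_iff: "run (rename_trans f (st_trans S)) (f (st_init S)) u w (f t) \<longleftrightarrow> run (st_trans S) (st_init S) u w t"
    if "t \<in> st_final S" for u w t
    using run_rename_trans_iff[OF f closed init] that final by blast
  have fout: "st_fout (rename_strans f S) (f t) = st_fout S t" if "t \<in> st_final S" for t
    using that final f by (auto simp: rename_strans_def)
  have "st_sem (rename_strans f S) = {(u, w @ st_fout (rename_strans f S) (f t)) | u w t.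
      t \<in> st_final S \<and> run (rename_trans f (st_trans S)) (f (st_init S)) u w (f t)}"
    unfolding st_sem_def by (auto simp: rename_strans_def)
  also have "\<dots> = st_sem S"
    unfolding st_sem_def by (metis (no_types, lifting) run_iff fout)
  finally show ?thesis .
qed

lemma sequential_function_st_sem:
  assumes "sequential_trans S"
  shows "sequential_function (st_sem S)"
proof -
  have "finite (st_states S)" using assms unfolding sequential_trans_def by blast
  then obtain f :: "_ \<Rightarrow> nat" where f: "inj_on f (st_states S)"
    using finite_imp_inj_to_nat_seg by blast
  show ?thesis
    unfolding sequential_function_def
  proof (intro exI conjI)
    show "sequential_trans (rename_strans f S)" using assms f by (rule sequential_trans_rename_strans)
    show "st_sem S = st_sem (rename_strans f S)" using assms f by (rule st_sem_rename_strans[symmetric])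
  qed
qed

section \<open>Layered sequential transducers\<close>

text \<open>State \<open>(p, k)\<close> means: at state \<open>p\<close>, after taking the first \<open>k\<close> transitions of \<open>s\<close>.\<close>

definition layer_trans :: "('q \<times> 'a \<times> 'b list \<times> 'q) set \<Rightarrow> ('q \<times> 'a \<times> 'b list \<times> 'q) list
    \<Rightarrow> (('q \<times> nat) \<times> 'a \<times> 'b list \<times> ('q \<times> nat)) set" where
  "layer_trans E s =
     {((p, k), a, v, (q, k)) | p a v q k. (p, a, v, q) \<in> E \<and> \<not> transient E (p, a, v, q) \<and> k \<le> length s}
   \<union> {((p, k), a, v, (q, Suc k)) | p a v q k. k < length s \<and> s ! k = (p, a, v, q)}"

lemma mem_layer_trans:
  "((p, k), a, v, q, m) \<in> layer_trans E s \<longleftrightarrow>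
     m = k \<and> k \<le> length s \<and> (p, a, v, q) \<in> E \<and> \<not> transient E (p, a, v, q)
   \<or> m = Suc k \<and> k < length s \<and> s ! k = (p, a, v, q)"
  unfolding layer_trans_def by auto

definition layer_strans :: "('q, 'a, 'b) mtrans \<Rightarrow> 'q \<Rightarrow> ('q \<times> 'a \<times> 'b list \<times> 'q) list \<Rightarrow> 'q
    \<Rightarrow> 'b list \<Rightarrow> ('q \<times> nat, 'a, 'b) strans" where
  "layer_strans T i s t x = \<lparr>st_states = mt_states T \<times> {0..length s},
     st_trans = layer_trans (mt_trans T) s, st_init = (i, 0), st_final = {(t, length s)},
     st_fout = (\<lambda>_. x)\<rparr>"

lemma run_layer_trans_imp_run_transients:
  assumes "run (layer_trans E s) pk u w qm" and "s \<in> transient_lists E"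
  shows "snd pk \<le> snd qm
    \<and> run_transients E (fst pk) u w (take (snd qm - snd pk) (drop (snd pk) s)) (fst qm)"
  using assms
proof (induction rule: run.induct)
  case (run_nil p)
  then show ?case by (auto intro: run_transients_nil)
next
  case (run_cons pk a v pk' u w qm)
  obtain p k p' k' where eqs: "pk = (p, k)" "pk' = (p', k')" by fastforce
  from run_cons.hyps(1) consider
      (stay) "k' = k" "(p, a, v, p') \<in> E" "\<not> transient E (p, a, v, p')"
    | (leave) "k' = Suc k" "k < length s" "s ! k = (p, a, v, p')"
    unfolding eqs mem_layer_trans by blast
  then show ?case
  proof cases
    case stay
    with run_cons.IH run_cons.prems eqs show ?thesis by (auto intro: run_transients_stay)
  next
    case leave
    with run_cons.IH run_cons.prems eqs have le: "Suc k \<le> snd qm" by simp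
    have "drop k s = (p, a, v, p') # drop (Suc k) s"
      using leave by (metis Cons_nth_drop_Suc)
    moreover have "snd qm - k = Suc (snd qm - Suc k)" using le by simp
    ultimately have "take (snd qm - k) (drop k s) = (p, a, v, p') # take (snd qm - Suc k) (drop (Suc k) s)"
      by simp
    moreover have "(p, a, v, p') \<in> E" "transient E (p, a, v, p')"
      using leave run_cons.prems nth_mem[of k s] unfolding transient_lists_def by auto
    ultimately show ?thesis using run_cons.IH run_cons.prems eqs leave le
      by (auto intro: run_transients_leave)
  qed
qed

lemma run_transients_imp_run_layer_trans:
  assumes "run_transients E p u w t q" and "k \<le> length s" and "drop k s = t @ r"
  shows "run (layer_trans E s) (p, k) u w (q, k + length t)"
  using assms
proof (induction arbitrary: k rule: run_transients.induct)
  case (run_transients_nil p)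
  then show ?case by (auto intro: run_nil)
next
  case (run_transients_stay p a v p' u w t q)
  then have "((p, k), a, v, (p', k)) \<in> layer_trans E s"
    unfolding layer_trans_def by blast
  with run_transients_stay show ?case by (auto intro: run_cons)
next
  case (run_transients_leave p a v p' u w t q)
  then have "drop k s \<noteq> []" by simp
  then have k: "k < length s" by simp
  then have "drop k s = s ! k # drop (Suc k) s" by (metis Cons_nth_drop_Suc)
  with run_transients_leave.prems have sk: "s ! k = (p, a, v, p')" "drop (Suc k) s = t @ r" by auto
  with k have "((p, k), a, v, (p', Suc k)) \<in> layer_trans E s" unfolding layer_trans_def by blast
  moreover have "run (layer_trans E s) (p', Suc k) u w (q, Suc k + length t)"
    using run_transients_leave.IH[of "Suc k"] k sk(2) by simp
  ultimately show ?case by (auto intro: run_cons)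
qed

lemma run_layer_trans_iff:
  assumes "s \<in> transient_lists E"
  shows "run (layer_trans E s) (p, 0) u w (q, length s) \<longleftrightarrow> run_transients E p u w s q"
proof
  assume "run (layer_trans E s) (p, 0) u w (q, length s)"
  from run_layer_trans_imp_run_transients[OF this assms] show "run_transients E p u w s q" by simp
next
  assume "run_transients E p u w s q"
  from run_transients_imp_run_layer_trans[OF this, of 0 s "[]"]
  show "run (layer_trans E s) (p, 0) u w (q, length s)" by simp
qed

lemma separable_nontransient_unique:
  assumes "separable T" and "(p, a, v, q) \<in> mt_trans T" and "(p, a, v', q') \<in> mt_trans T"
    and "\<not> transient (mt_trans T) (p, a, v, q)"
  shows "v = v' \<and> q = q'"
  using assms unfolding separable_def by fastforce

lemma layer_trans_deterministic:
  assumes sep: "separable T" and s: "s \<in> transient_lists (mt_trans T)"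
    and "(pk, a, v, q) \<in> layer_trans (mt_trans T) s" and "(pk, a, v', q') \<in> layer_trans (mt_trans T) s"
  shows "v = v' \<and> q = q'"
proof -
  let ?E = "mt_trans T"
  obtain p k q0 m q0' m' where eqs: "pk = (p, k)" "q = (q0, m)" "q' = (q0', m')"
    by (metis prod.exhaust)
  have jump: "s ! k \<in> ?E" "transient ?E (s ! k)" if "k < length s"
    using s nth_mem[OF that] unfolding transient_lists_def by auto
  note unique = separable_nontransient_unique[OF sep]
  from assms(3,4) show ?thesis
    unfolding eqs mem_layer_trans
  proof (elim disjE conjE)
    assume "(p, a, v, q0) \<in> ?E" "\<not> transient ?E (p, a, v, q0)" "(p, a, v', q0') \<in> ?E"
      "m = k" "m' = k"
    with unique show "v = v' \<and> (q0, m) = (q0', m')" by blast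
  next
    assume "(p, a, v, q0) \<in> ?E" "\<not> transient ?E (p, a, v, q0)" "k < length s"
      "s ! k = (p, a, v', q0')"
    with unique jump show "v = v' \<and> (q0, m) = (q0', m')" by metis
  next
    assume "(p, a, v', q0') \<in> ?E" "\<not> transient ?E (p, a, v', q0')" "k < length s"
      "s ! k = (p, a, v, q0)"
    with unique jump show "v = v' \<and> (q0, m) = (q0', m')" by metis
  qed auto
qed

lemma layer_trans_subset:
  assumes "set s \<subseteq> E"
  shows "layer_trans E s \<subseteq> (\<lambda>((p, a, v, q), k, m). ((p, k), a, v, (q, m))) ` (E \<times> {0..length s} \<times> {0..length s})"
proof
  fix e assume e: "e \<in> layer_trans E s"
  obtain p k a v q m where e_eq: "e = ((p, k), a, v, (q, m))" by (metis prod.exhaust)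
  from e have "(p, a, v, q) \<in> E \<and> k \<le> length s \<and> m \<le> length s"
    unfolding e_eq mem_layer_trans
  proof (elim disjE conjE)
    assume "m = Suc k" "k < length s" "s ! k = (p, a, v, q)"
    with assms nth_mem[of k s] show ?thesis by auto
  qed simp
  then show "e \<in> (\<lambda>((p, a, v, q), k, m). ((p, k), a, v, (q, m))) ` (E \<times> {0..length s} \<times> {0..length s})"
    unfolding e_eq by (intro image_eqI[where x = "((p, a, v, q), k, m)"]) auto
qed

lemma sequential_trans_layer_strans:
  assumes wf: "wf_mtrans T" and sep: "separable T" and i: "i \<in> mt_states T"
    and t: "t \<in> mt_states T" and s: "s \<in> transient_lists (mt_trans T)"
  shows "sequential_trans (layer_strans T i s t x)"
proof -
  let ?E = "mt_trans T" and ?Q = "mt_states T \<times> {0..length s}"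
  have closed: "\<forall>(p, a, v, q) \<in> ?E. p \<in> mt_states T \<and> q \<in> mt_states T"
    and fin: "finite (mt_states T)" "finite ?E"
    using wf unfolding wf_mtrans_def by blast+
  have sub: "layer_trans ?E s \<subseteq> (\<lambda>((p, a, v, q), k, m). ((p, k), a, v, (q, m))) ` (?E \<times> {0..length s} \<times> {0..length s})"
    using s unfolding transient_lists_def by (intro layer_trans_subset) auto
  have closed': "\<forall>(p, a, v, q) \<in> layer_trans ?E s. p \<in> ?Q \<and> q \<in> ?Q"
    using subsetD[OF sub] closed by fastforce
  show ?thesis
    unfolding sequential_trans_def layer_strans_def strans.simps
  proof (intro conjI allI impI)
    show "finite (layer_trans ?E s)"
      using fin(2) by (intro finite_subset[OF sub] finite_imageI finite_cartesian_product) auto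
  qed (use fin(1) closed' i t layer_trans_deterministic[OF sep s] in auto)
qed

lemma mt_sem_eq_Union_layer_strans:
  assumes "mt_init T = {i}"
  shows "mt_sem T = (\<Union>(s, t, x) \<in> transient_lists (mt_trans T) \<times> Sigma (mt_final T) (mt_fout T).
                        st_sem (layer_strans T i s t x))"
    (is "_ = ?U")
proof
  show "mt_sem T \<subseteq> ?U"
  proof
    fix z assume "z \<in> mt_sem T"
    then obtain u w x t where z: "z = (u, w @ x)" "t \<in> mt_final T" "x \<in> mt_fout T t"
      "run (mt_trans T) i u w t"
      unfolding mt_sem_def assms by blast
    obtain s where s: "run_transients (mt_trans T) i u w s t"
      using run_imp_run_transients[OF z(4)] by blast
    then have "s \<in> transient_lists (mt_trans T)" by (rule run_transients_in_transient_lists)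
    with s have "run (layer_trans (mt_trans T) s) (i, 0) u w (t, length s)"
      by (simp add: run_layer_trans_iff)
    with z \<open>s \<in> transient_lists (mt_trans T)\<close> show "z \<in> ?U"
      unfolding st_sem_def layer_strans_def by force
  qed
next
  show "?U \<subseteq> mt_sem T"
  proof clarify
    fix s t x u y
    assume idx: "s \<in> transient_lists (mt_trans T)" "t \<in> mt_final T" "x \<in> mt_fout T t"
      and "(u, y) \<in> st_sem (layer_strans T i s t x)"
    then obtain w where "y = w @ x" "run (layer_trans (mt_trans T) s) (i, 0) u w (t, length s)"
      unfolding st_sem_def layer_strans_def by auto
    with idx have "y = w @ x" "run (mt_trans T) i u w t"
      by (auto simp: run_layer_trans_iff intro: run_transients_imp_run)
    with idx show "(u, y) \<in> mt_sem T"
      unfolding mt_sem_def assms by blast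
  qed
qed

theorem lemma5:
  fixes T :: "('q, 'a, 'b) mtrans"
  assumes "wf_mtrans T"
    and "separable T"
  shows "multi_sequential (mt_sem T)"
proof -
  obtain i where i: "mt_init T = {i}" using assms(2) unfolding separable_def by blast
  let ?Idx = "transient_lists (mt_trans T) \<times> Sigma (mt_final T) (mt_fout T)"
  let ?Rs = "(\<lambda>(s, t, x). st_sem (layer_strans T i s t x)) ` ?Idx"
  have "finite (mt_final T)" using assms(1) unfolding wf_mtrans_def by (blast intro: finite_subset)
  then have "finite ?Idx"
    using assms(1) by (intro finite_SigmaI finite_transient_lists) (auto simp: wf_mtrans_def)
  moreover have "\<forall>R \<in> ?Rs. sequential_function R"
  proof
    fix R assume "R \<in> ?Rs"
    then obtain s t x where s: "s \<in> transient_lists (mt_trans T)" and t: "t \<in> mt_final T"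
      and R: "R = st_sem (layer_strans T i s t x)"
      by auto
    have "i \<in> mt_states T" "t \<in> mt_states T" using assms(1) i t unfolding wf_mtrans_def by auto
    then show "sequential_function R"
      unfolding R by (intro sequential_function_st_sem sequential_trans_layer_strans[OF assms] s)
  qed
  ultimately show ?thesis
    unfolding multi_sequential_def mt_sem_eq_Union_layer_strans[OF i] by blast
qed

end
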